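(* For every $n\geq1$, $Z_{\mathbb{A}_n}$ is the disjoint union of (an open subvariety isomorphic to) $Y_{\mathbb{A}_n}$ and (a closed subvariety isomorphic to) $Y_{\mathbb{A}_{n-1}}$. The number of points of $Z_{\mathbb{A}_n}$ over $\mathbb{F}_q$ is $q^{n+1}$.
   Context: For $n\ge1$, $Z_{\mathbb{A}_n}$ is the affine variety in variables $(\alpha,x_1,\dots,x_n,x'_1,\dots,x'_n)$ ($\alpha$ arbitrary) defined by $x_1x'_1=1+\alpha x_2$, $x_ix'_i=1+x_{i-1}x_{i+1}$ for $2\le i\le n-1$, $x_nx'_n=1+x_{n-1}$ (for $n=1$: $x_1x'_1=1+\alpha$). $Y_{\mathbb{A}_n}$ is the open subvariety where $\alpha\neq0$ (the union of the fibers $X_n(\alpha)$ over invertible $\alpha$); by convention $Y_{\mathbb{A}_0}=\mathbb{A}^1\setminus\{0\}$. *)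

theory Defs
  imports Main
begin

text \<open>Points are lists p of length 2n+1: p!0 = alpha, p!i = x_i, p!(n+i) = x'_i (1 \<le> i \<le> n).
  The exchange relation for index i reads x_i x'_i = 1 + x_{i-1} x_{i+1}, with the
  conventions x_0 = alpha and x_{n+1} = 1.  For n = 0 this gives the set of length-1 lists.\<close>

definition Z_A :: "nat \<Rightarrow> 'k::field list set" where
  "Z_A n = {p. length p = 2*n+1 \<and>
     (\<forall>i\<in>{1..n}. p!i * p!(n+i) = 1 + p!(i-1) * (if i < n then p!(i+1) else 1))}"

definition Y_A :: "nat \<Rightarrow> 'k::field list set" where
  "Y_A n = {p \<in> Z_A n. p!0 \<noteq> 0}"

definition Z0_A :: "nat \<Rightarrow> 'k::field list set" where
  "Z0_A n = {p \<in> Z_A n. p!0 = 0}"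

text \<open>Regular functions: expressions in the coordinates with integer constants, allowing the
  inverse of a coordinate (only where that coordinate does not vanish).\<close>
datatype rexpr = RVar nat | RConst int | RAdd rexpr rexpr | RMul rexpr rexpr | RNeg rexpr
  | RInv nat

fun reval :: "rexpr \<Rightarrow> 'k::field list \<Rightarrow> 'k" where
  "reval (RVar i) p = p!i"
| "reval (RConst c) p = of_int c"
| "reval (RAdd a b) p = reval a p + reval b p"
| "reval (RMul a b) p = reval a p * reval b p"
| "reval (RNeg a) p = - reval a p"
| "reval (RInv i) p = inverse (p!i)"

fun rinvs :: "rexpr \<Rightarrow> nat set" where
  "rinvs (RVar i) = {}"
| "rinvs (RConst c) = {}"
| "rinvs (RAdd a b) = rinvs a \<union> rinvs b"
| "rinvs (RMul a b) = rinvs a \<union> rinvs b"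
| "rinvs (RNeg a) = rinvs a"
| "rinvs (RInv i) = {i}"

definition regular_map_on :: "'k::field list set \<Rightarrow> rexpr list \<Rightarrow> bool" where
  "regular_map_on X fs = (\<forall>e\<in>set fs. \<forall>i\<in>rinvs e. \<forall>p\<in>X. p!i \<noteq> 0)"

definition rapply :: "rexpr list \<Rightarrow> 'k::field list \<Rightarrow> 'k list" where
  "rapply fs p = map (\<lambda>e. reval e p) fs"

definition reg_iso :: "'k::field list set \<Rightarrow> 'k list set \<Rightarrow> bool" where
  "reg_iso X Y = (\<exists>f g. regular_map_on X f \<and> regular_map_on Y g \<and>
     (\<forall>p\<in>X. rapply f p \<in> Y \<and> rapply g (rapply f p) = p) \<and>
     (\<forall>q\<in>Y. rapply g q \<in> X \<and> rapply f (rapply g q) = q))"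

end

theory Submission
  imports Defs
begin

text \<open>On the fibre \<open>\<alpha> = 0\<close> the first exchange relation reads \<open>x\<^sub>1 x'\<^sub>1 = 1\<close>, so \<open>x\<^sub>1\<close>
  is a unit; forgetting \<open>\<alpha>\<close> and \<open>x'\<^sub>1 = 1/x\<^sub>1\<close> and taking \<open>x\<^sub>1\<close> as the new
  \<open>\<alpha>\<close> identifies this fibre with \<open>Y\<^sub>A\<^sub>n\<^sub>-\<^sub>1\<close>.

  For the point count, read the coordinates from the fixed end \<open>x\<^sub>n\<^sub>+\<^sub>1 = c \<noteq> 0\<close>
  downwards. If \<open>x\<^sub>n \<noteq> 0\<close>, then \<open>x'\<^sub>n\<close> is determined and the rest is a shorter chain
  ending in the unit \<open>x\<^sub>n\<close>; if \<open>x\<^sub>n = 0\<close>, then \<open>x\<^sub>n\<^sub>-\<^sub>1 = -1/c\<close> and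
  \<open>x'\<^sub>n\<^sub>-\<^sub>1 = -c\<close> are forced while \<open>x'\<^sub>n\<close> is free. So the number \<open>N\<^sub>n\<close> of
  chains satisfies \<open>N\<^sub>n = (q - 1) N\<^sub>n\<^sub>-\<^sub>1 + q N\<^sub>n\<^sub>-\<^sub>2\<close>, which \<open>N\<^sub>n = q\<^sup>n\<^sup>+\<^sup>1\<close> solves.\<close>

lemma length_of_mem_Z_A: "p \<in> Z_A n \<Longrightarrow> length p = 2 * n + 1"
  by (simp add: Z_A_def)

lemma Z_A_exchange:
  assumes "p \<in> Z_A n" "1 \<le> i" "i \<le> n"
  shows "p!i * p!(n+i) = 1 + p!(i-1) * (if i < n then p!(i+1) else 1)"
  using assms by (simp add: Z_A_def)

lemma rapply_map_upt: "rapply (map h [0..<k]) p = map (\<lambda>j. reval (h j) p) [0..<k]"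
  by (simp add: rapply_def)

lemma reg_iso_refl:
  assumes "\<forall>p\<in>X. length p = k"
  shows "reg_iso X X"
proof -
  have id: "rapply (map RVar [0..<k]) p = p" if "p \<in> X" for p
  proof -
    from assms that have "length p = k" by blast
    then show ?thesis
      using map_nth[of p] by (simp add: rapply_map_upt)
  qed
  show ?thesis
    unfolding reg_iso_def
    by (intro exI[of _ "map RVar [0..<k]"]) (auto simp: regular_map_on_def id)
qed

text \<open>On \<open>Z0_A (Suc m)\<close> the coordinates dropped are \<open>\<alpha>\<close> (index \<open>0\<close>) and
  \<open>x'\<^sub>1\<close> (index \<open>m + 2\<close>).\<close>

definition Z0_to_Y :: "nat \<Rightarrow> rexpr list" where
  "Z0_to_Y m = map (\<lambda>j. RVar (if j \<le> m then j + 1 else j + 2)) [0..<2 * m + 1]"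

definition Y_to_Z0 :: "nat \<Rightarrow> rexpr list" where
  "Y_to_Z0 m = map (\<lambda>i. if i = 0 then RConst 0 else if i \<le> Suc m then RVar (i - 1)
     else if i = m + 2 then RInv 0 else RVar (i - 2)) [0..<2 * m + 3]"

lemma length_rapply_Z0_to_Y: "length (rapply (Z0_to_Y m) p) = 2 * m + 1"
  by (simp add: Z0_to_Y_def rapply_def)

lemma nth_rapply_Z0_to_Y:
  "j < 2 * m + 1 \<Longrightarrow> rapply (Z0_to_Y m) p ! j = p ! (if j \<le> m then j + 1 else j + 2)"
  by (simp add: Z0_to_Y_def rapply_map_upt del: upt_Suc)

lemma length_rapply_Y_to_Z0: "length (rapply (Y_to_Z0 m) q) = 2 * m + 3"
  by (simp add: Y_to_Z0_def rapply_def)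

lemma nth_rapply_Y_to_Z0:
  "i < 2 * m + 3 \<Longrightarrow> rapply (Y_to_Z0 m) q ! i =
    (if i = 0 then 0 else if i \<le> Suc m then q ! (i - 1)
     else if i = m + 2 then inverse (q ! 0) else q ! (i - 2))"
  by (simp add: Y_to_Z0_def rapply_map_upt del: upt_Suc)

lemma Z0_A_first_exchange:
  assumes "p \<in> Z0_A (Suc m)"
  shows "p ! 1 * p ! (m + 2) = 1"
  using assms Z_A_exchange[of p "Suc m" 1] by (simp add: Z0_A_def)

lemma Z0_to_Y_mem:
  assumes p: "p \<in> Z0_A (Suc m)"
  shows "rapply (Z0_to_Y m) p \<in> Y_A m"
proof -
  let ?q = "rapply (Z0_to_Y m) p"
  have "?q!i * ?q!(m+i) = 1 + ?q!(i-1) * (if i < m then ?q!(i+1) else 1)"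
    if "i \<in> {1..m}" for i
  proof -
    from that obtain k where i: "i = Suc k" "k < m"
      by (cases i) auto
    moreover have "p \<in> Z_A (Suc m)"
      using p by (simp add: Z0_A_def)
    ultimately show ?thesis
      using Z_A_exchange[of p "Suc m" "k + 2"] by (simp add: nth_rapply_Z0_to_Y)
  qed
  moreover have "?q ! 0 \<noteq> 0"
    using Z0_A_first_exchange[OF p] by (auto simp: nth_rapply_Z0_to_Y)
  ultimately show ?thesis
    by (simp add: Y_A_def Z_A_def length_rapply_Z0_to_Y)
qed

lemma Y_to_Z0_mem:
  assumes q: "q \<in> Y_A m"
  shows "rapply (Y_to_Z0 m) q \<in> Z0_A (Suc m)"
proof -
  let ?p = "rapply (Y_to_Z0 m) q"
  have q0: "q ! 0 \<noteq> 0"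
    using q by (simp add: Y_A_def)
  have "?p!i * ?p!(Suc m + i) = 1 + ?p!(i-1) * (if i < Suc m then ?p!(i+1) else 1)"
    if "i \<in> {1..Suc m}" for i
  proof (cases "i = 1")
    case True
    with q0 show ?thesis by (simp add: nth_rapply_Y_to_Z0)
  next
    case False
    with that have "2 \<le> i" by simp
    then obtain k where "i = k + 2"
      by (metis le_add_diff_inverse2)
    with that have i: "i = k + 2" "k < m" by auto
    have "q \<in> Z_A m"
      using q by (simp add: Y_A_def)
    then have "q!(k+1) * q!(m+(k+1)) = 1 + q!k * (if k + 1 < m then q!(k+2) else 1)"
      using Z_A_exchange[of q m "k + 1"] i by simp
    moreover have "?p!(k+2) = q!(k+1)" "?p!(Suc m + (k+2)) = q!(m+(k+1))" "?p!(k+1) = q!k"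
      using i by (simp_all add: nth_rapply_Y_to_Z0)
    moreover have "k + 1 < m \<Longrightarrow> ?p!(k+3) = q!(k+2)"
      by (simp add: nth_rapply_Y_to_Z0)
    ultimately show ?thesis
      using i by (simp add: numeral_3_eq_3)
  qed
  then show ?thesis
    by (simp add: Z0_A_def Z_A_def length_rapply_Y_to_Z0 nth_rapply_Y_to_Z0)
qed

lemma Y_to_Z0_Z0_to_Y:
  assumes p: "p \<in> Z0_A (Suc m)"
  shows "rapply (Y_to_Z0 m) (rapply (Z0_to_Y m) p) = p"
proof (rule nth_equalityI)
  have "length p = 2 * m + 3" and p0: "p ! 0 = 0"
    using p by (simp_all add: Z0_A_def Z_A_def)
  then show "length (rapply (Y_to_Z0 m) (rapply (Z0_to_Y m) p)) = length p"
    by (simp add: length_rapply_Y_to_Z0)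
  fix i assume "i < length (rapply (Y_to_Z0 m) (rapply (Z0_to_Y m) p))"
  then have i: "i < 2 * m + 3" by (simp add: length_rapply_Y_to_Z0)
  consider "i = 0" | "1 \<le> i" "i \<le> Suc m" | "i = m + 2" | "m + 2 < i"
    by linarith
  then show "rapply (Y_to_Z0 m) (rapply (Z0_to_Y m) p) ! i = p ! i"
  proof cases
    case 1
    with p0 show ?thesis by (simp add: nth_rapply_Y_to_Z0)
  next
    case 2
    then obtain k where "i = Suc k" "k \<le> m" by (cases i) auto
    then show ?thesis by (simp add: nth_rapply_Y_to_Z0 nth_rapply_Z0_to_Y)
  next
    case 3
    then show ?thesis
      using Z0_A_first_exchange[OF p] inverse_unique
      by (simp add: nth_rapply_Y_to_Z0 nth_rapply_Z0_to_Y)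
  next
    case 4
    define k where "k = i - 2"
    with 4 have "i = k + 2" "m < k" by auto
    with i show ?thesis by (simp add: nth_rapply_Y_to_Z0 nth_rapply_Z0_to_Y)
  qed
qed

lemma Z0_to_Y_Y_to_Z0:
  assumes "length q = 2 * m + 1"
  shows "rapply (Z0_to_Y m) (rapply (Y_to_Z0 m) q) = q"
  using assms
  by (intro nth_equalityI) (auto simp: length_rapply_Z0_to_Y nth_rapply_Z0_to_Y nth_rapply_Y_to_Z0)

lemma reg_iso_Z0_A_Y_A: "reg_iso (Z0_A (Suc m)) (Y_A m)"
  unfolding reg_iso_def
proof (intro exI conjI)
  show "regular_map_on (Z0_A (Suc m)) (Z0_to_Y m)"
    by (auto simp: regular_map_on_def Z0_to_Y_def)
  show "regular_map_on (Y_A m) (Y_to_Z0 m)"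
    by (auto simp: regular_map_on_def Y_to_Z0_def Y_A_def)
  show "\<forall>p\<in>Z0_A (Suc m). rapply (Z0_to_Y m) p \<in> Y_A m
      \<and> rapply (Y_to_Z0 m) (rapply (Z0_to_Y m) p) = p"
    using Z0_to_Y_mem Y_to_Z0_Z0_to_Y by blast
  show "\<forall>q\<in>Y_A m. rapply (Y_to_Z0 m) q \<in> Z0_A (Suc m)
      \<and> rapply (Z0_to_Y m) (rapply (Y_to_Z0 m) q) = q"
    using Y_to_Z0_mem Z0_to_Y_Y_to_Z0 by (auto simp: Y_A_def Z_A_def)
qed

text \<open>A point of \<open>Z_A n\<close> read backwards: \<open>xs = [x\<^sub>n, \<dots>, x\<^sub>1, \<alpha>]\<close>,
  \<open>ys = [x'\<^sub>n, \<dots>, x'\<^sub>1]\<close>, and \<open>c\<close> is the value of \<open>x\<^sub>n\<^sub>+\<^sub>1\<close>.\<close>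

fun exchange_chain :: "'a::field \<Rightarrow> 'a list \<Rightarrow> 'a list \<Rightarrow> bool" where
  "exchange_chain c [x] [] = True"
| "exchange_chain c (x # x1 # xs) (y # ys) =
     (x * y = 1 + x1 * c \<and> exchange_chain x (x1 # xs) ys)"
| "exchange_chain c _ _ = False"

definition exchange_chains :: "nat \<Rightarrow> 'a::field \<Rightarrow> ('a list \<times> 'a list) set" where
  "exchange_chains n c = {(xs, ys). length xs = Suc n \<and> exchange_chain c xs ys}"

definition pinned_chains :: "nat \<Rightarrow> 'a::field \<Rightarrow> ('a list \<times> 'a list) set" where
  "pinned_chains n d = {(xs, ys) \<in> exchange_chains n 0. hd xs = d}"

lemma exchange_chain_length: "exchange_chain c xs ys \<Longrightarrow> length xs = Suc (length ys)"
  by (induction c xs ys rule: exchange_chain.induct) auto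

lemma exchange_chain_iff_nth:
  assumes "length xs = Suc (length ys)"
  shows "exchange_chain c xs ys \<longleftrightarrow>
    (\<forall>j<length ys. xs!j * ys!j = 1 + xs!(j+1) * (if j = 0 then c else xs!(j-1)))"
  using assms
proof (induction ys arbitrary: xs c)
  case Nil
  then obtain x where "xs = [x]" by (auto simp: length_Suc_conv)
  then show ?case by simp
next
  case (Cons y ys)
  then obtain x x1 xs' where xs: "xs = x # x1 # xs'" by (auto simp: length_Suc_conv)
  with Cons show ?case
    by (simp only: exchange_chain.simps length_Cons All_less_Suc2)
       (simp add: nth_Cons split: nat.splits)
qed

lemma finite_exchange_chains: "finite (exchange_chains n (c::'a::{finite,field}))"
proof (rule finite_subset)
  show "exchange_chains n c \<subseteq> {xs. length xs = Suc n} \<times> {ys. length ys = n}"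
    unfolding exchange_chains_def using exchange_chain_length by fastforce
qed (use finite_lists_length_eq[OF finite_UNIV] in auto)

lemma exchange_chains_0: "exchange_chains 0 c = (\<lambda>x. ([x], [])) ` UNIV"
proof -
  have "exchange_chain c [x] ys \<longleftrightarrow> ys = []" for x ys by (cases ys) auto
  then show ?thesis unfolding exchange_chains_def by (auto simp: length_Suc_conv)
qed

lemma pinned_chains_0: "pinned_chains 0 d = {([d], [])}"
  unfolding pinned_chains_def exchange_chains_0 by auto

lemma pinned_chains_Suc:
  assumes "d \<noteq> 0"
  shows "pinned_chains (Suc m) d = (\<lambda>(xs, ys). (d # xs, inverse d # ys)) ` exchange_chains m d"
proof (intro set_eqI iffI)
  fix p assume "p \<in> pinned_chains (Suc m) d"
  then obtain x1 xs y ys where p: "p = (d # x1 # xs, y # ys)" "length xs = m"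
    and "d * y = 1" "exchange_chain d (x1 # xs) ys"
    unfolding pinned_chains_def exchange_chains_def
    by (auto simp: length_Suc_conv elim: exchange_chain.elims)
  then show "p \<in> (\<lambda>(xs, ys). (d # xs, inverse d # ys)) ` exchange_chains m d"
    using inverse_unique by (force simp: exchange_chains_def)
next
  fix p assume "p \<in> (\<lambda>(xs, ys). (d # xs, inverse d # ys)) ` exchange_chains m d"
  then obtain x1 xs ys where "p = (d # x1 # xs, inverse d # ys)" "length xs = m"
    "exchange_chain d (x1 # xs) ys"
    unfolding exchange_chains_def by (auto simp: length_Suc_conv)
  with assms show "p \<in> pinned_chains (Suc m) d"
    unfolding pinned_chains_def exchange_chains_def by auto
qed

lemma card_pinned_chains_Suc:
  assumes "d \<noteq> 0"
  shows "card (pinned_chains (Suc m) d) = card (exchange_chains m d)"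
  unfolding pinned_chains_Suc[OF assms] by (rule card_image) (auto intro!: inj_onI)

lemma exchange_chains_Suc:
  assumes "c \<noteq> 0"
  shows "exchange_chains (Suc n) c =
    (\<lambda>(x, xs, ys). (x # xs, ((1 + hd xs * c) / x) # ys))
      ` (SIGMA x:-{0}. exchange_chains n x)
    \<union> (\<lambda>(y, xs, ys). (0 # xs, y # ys)) ` (UNIV \<times> pinned_chains n (- inverse c))"
    (is "_ = ?nonzero \<union> ?zero")
proof (intro set_eqI iffI)
  fix p assume "p \<in> exchange_chains (Suc n) c"
  then obtain x x1 xs y ys where p: "p = (x # x1 # xs, y # ys)" "length xs = n"
    and exch: "x * y = 1 + x1 * c" and rest: "exchange_chain x (x1 # xs) ys"
    unfolding exchange_chains_def by (auto simp: length_Suc_conv elim: exchange_chain.elims)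
  show "p \<in> ?nonzero \<union> ?zero"
  proof (cases "x = 0")
    case True
    with exch assms have "x1 = - inverse c" by (simp add: field_simps eq_neg_iff_add_eq_0)
    with True p rest show ?thesis
      by (auto simp: pinned_chains_def exchange_chains_def image_iff
          intro!: bexI[of _ "(y, x1 # xs, ys)"])
  next
    case False
    with exch have "y = (1 + x1 * c) / x" by (simp add: field_simps)
    with False p rest show ?thesis
      by (auto simp: exchange_chains_def image_iff intro!: bexI[of _ "(x, x1 # xs, ys)"])
  qed
next
  fix p assume "p \<in> ?nonzero \<union> ?zero"
  then show "p \<in> exchange_chains (Suc n) c"
  proof
    assume "p \<in> ?nonzero"
    then obtain x xs ys where "x \<noteq> 0" "(xs, ys) \<in> exchange_chains n x"
      and "p = (x # xs, ((1 + hd xs * c) / x) # ys)"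
      by auto
    then show ?thesis by (auto simp: exchange_chains_def length_Suc_conv)
  next
    assume "p \<in> ?zero"
    then obtain y x1 xs ys where "p = (0 # x1 # xs, y # ys)" "x1 = - inverse c"
      "length xs = n" "exchange_chain 0 (x1 # xs) ys"
      by (auto simp: pinned_chains_def exchange_chains_def length_Suc_conv)
    with assms show ?thesis by (simp add: exchange_chains_def)
  qed
qed

lemma card_exchange_chains_Suc:
  fixes c :: "'a::{finite,field}"
  assumes "c \<noteq> 0"
  shows "card (exchange_chains (Suc n) c) =
    (\<Sum>x\<in>-{0::'a}. card (exchange_chains n x))
    + card (UNIV :: 'a set) * card (pinned_chains n (- inverse c))"
proof -
  let ?nonzero_top = "\<lambda>(x, xs, ys). (x # xs, ((1 + hd xs * c) / x) # ys)"
  let ?zero_top = "\<lambda>(y::'a, xs, ys). (0 # xs, y # ys)"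
  have finite_pinned: "finite (pinned_chains n d)" for d :: 'a
    using finite_exchange_chains[of n 0] unfolding pinned_chains_def
    by (rule finite_subset[rotated]) auto
  have "card (exchange_chains (Suc n) c) =
      card (?nonzero_top ` (SIGMA x:-{0}. exchange_chains n x))
      + card (?zero_top ` (UNIV \<times> pinned_chains n (- inverse c)))"
    unfolding exchange_chains_Suc[OF assms]
    by (rule card_Un_disjoint)
       (auto intro!: finite_imageI simp: finite_exchange_chains finite_pinned)
  also have "\<dots> = card (SIGMA x:-{0::'a}. exchange_chains n x)
      + card ((UNIV :: 'a set) \<times> pinned_chains n (- inverse c))"
    by (subst (1 2) card_image) (auto intro!: inj_onI)
  also have "\<dots> = (\<Sum>x\<in>-{0::'a}. card (exchange_chains n x))
      + card (UNIV :: 'a set) * card (pinned_chains n (- inverse c))"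
    by (subst card_SigmaI) (simp_all add: finite_exchange_chains card_cartesian_product)
  finally show ?thesis .
qed

lemma card_exchange_chains:
  fixes c :: "'a::{finite,field}"
  assumes "c \<noteq> 0"
  shows "card (exchange_chains n c) = card (UNIV :: 'a set) ^ Suc n"
  using assms
proof (induction n arbitrary: c rule: less_induct)
  case (less n)
  let ?q = "card (UNIV :: 'a set)"
  show ?case
  proof (cases n)
    case 0
    then show ?thesis by (simp add: exchange_chains_0 card_image inj_on_def)
  next
    case (Suc m)
    have "card (pinned_chains m (- inverse c)) = ?q ^ m"
    proof (cases m)
      case 0
      then show ?thesis by (simp add: pinned_chains_0)
    next
      case (Suc k)
      with less.IH[of k "- inverse c"] less.prems \<open>n = Suc m\<close> show ?thesis
        by (simp add: card_pinned_chains_Suc)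
    qed
    moreover have "(\<Sum>x\<in>-{0::'a}. card (exchange_chains m x)) = (?q - 1) * ?q ^ Suc m"
      using less.IH[of m] Suc by (simp add: Compl_eq_Diff_UNIV card_Diff_singleton)
    moreover have "?q \<ge> 1"
      using finite_UNIV_card_ge_0[where 'a='a] by simp
    ultimately show ?thesis
      using card_exchange_chains_Suc[OF less.prems, of m] Suc by (simp add: algebra_simps)
  qed
qed

definition chain_of_point :: "nat \<Rightarrow> 'a list \<Rightarrow> 'a list \<times> 'a list" where
  "chain_of_point n p = (rev (take (Suc n) p), rev (drop (Suc n) p))"

definition point_of_chain :: "'a list \<times> 'a list \<Rightarrow> 'a list" where
  "point_of_chain = (\<lambda>(xs, ys). rev xs @ rev ys)"

lemma ball_atLeastAtMost_reflect:
  "(\<forall>i\<in>{1..n}. P i) \<longleftrightarrow> (\<forall>j<n. P (n - j :: nat))"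
  by (metis atLeastAtMost_iff diff_diff_cancel diff_less diff_le_self less_one not_less
      zero_less_diff le_add_diff_inverse le_less_trans)

lemma mem_Z_A_iff_chain:
  assumes "length p = 2 * n + 1"
  shows "p \<in> Z_A n \<longleftrightarrow> chain_of_point n p \<in> exchange_chains n 1"
proof -
  let ?xs = "rev (take (Suc n) p)" and ?ys = "rev (drop (Suc n) p)"
  have xs: "?xs ! j = p ! (n - j)" if "j \<le> n" for j
    using assms that by (simp add: rev_nth)
  have ys: "?ys ! j = p ! (2 * n - j)" if "j < n" for j
    using assms that by (simp add: rev_nth Suc_diff_Suc[of j "n + n"] mult_2)
  have "exchange_chain 1 ?xs ?ys \<longleftrightarrow>
      (\<forall>j<n. p!(n-j) * p!(2*n-j) = 1 + p!(n-j-1) * (if j = 0 then 1 else p!(n-(j-1))))"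
    using assms by (simp add: exchange_chain_iff_nth xs ys Suc_diff_Suc)
  also have "\<dots> \<longleftrightarrow> (\<forall>i\<in>{1..n}. p!i * p!(n+i) = 1 + p!(i-1) * (if i < n then p!(i+1) else 1))"
    unfolding ball_atLeastAtMost_reflect by (intro all_cong) (auto simp: mult_2 Suc_diff_le)
  finally show ?thesis
    using assms by (simp add: Z_A_def chain_of_point_def exchange_chains_def)
qed

lemma bij_betw_chain_of_point: "bij_betw (chain_of_point n) (Z_A n) (exchange_chains n 1)"
proof (rule bij_betw_byWitness[where f' = point_of_chain])
  show "\<forall>p\<in>Z_A n. point_of_chain (chain_of_point n p) = p"
    by (simp add: point_of_chain_def chain_of_point_def)
  show "\<forall>c\<in>exchange_chains n 1. chain_of_point n (point_of_chain c) = c"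
    by (auto simp: point_of_chain_def chain_of_point_def exchange_chains_def)
  show "chain_of_point n ` Z_A n \<subseteq> exchange_chains n 1"
    using mem_Z_A_iff_chain length_of_mem_Z_A by blast
  show "point_of_chain ` exchange_chains n 1 \<subseteq> Z_A n"
  proof
    fix p assume "p \<in> point_of_chain ` exchange_chains n 1"
    then obtain c where c: "c \<in> exchange_chains n 1" "p = point_of_chain c" by blast
    then have "length p = 2 * n + 1" and "chain_of_point n p = c"
      by (auto simp: point_of_chain_def chain_of_point_def exchange_chains_def
          dest: exchange_chain_length)
    with c show "p \<in> Z_A n" by (simp add: mem_Z_A_iff_chain)
  qed
qed

lemma card_Z_A: "card (Z_A n :: 'a::{finite,field} list set) = card (UNIV :: 'a set) ^ Suc n"
proof -
  have "card (Z_A n :: 'a list set) = card (exchange_chains n (1::'a))"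
    by (rule bij_betw_same_card[OF bij_betw_chain_of_point])
  then show ?thesis by (simp add: card_exchange_chains)
qed

theorem mainTheorem8:
  fixes n :: nat
  assumes "n \<ge> 1"
  shows "(Z_A n :: 'k::field list set) = Y_A n \<union> Z0_A n
         \<and> Y_A n \<inter> (Z0_A n :: 'k list set) = {}
         \<and> reg_iso (Y_A n :: 'k list set) (Y_A n)
         \<and> reg_iso (Z0_A n :: 'k list set) (Y_A (n - 1))
         \<and> card (Z_A n :: 'q::{finite,field} list set) = card (UNIV :: 'q set) ^ (n + 1)"
proof (intro conjI)
  obtain m where n: "n = Suc m"
    using assms by (cases n) auto
  show "Z_A n = Y_A n \<union> Z0_A n" and "Y_A n \<inter> Z0_A n = {}"
    by (auto simp: Y_A_def Z0_A_def)
  show "reg_iso (Y_A n) (Y_A n)"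
    by (rule reg_iso_refl[where k = "2 * n + 1"]) (auto simp: Y_A_def length_of_mem_Z_A)
  show "reg_iso (Z0_A n) (Y_A (n - 1))"
    unfolding n by (simp add: reg_iso_Z0_A_Y_A)
  show "card (Z_A n :: 'q list set) = card (UNIV :: 'q set) ^ (n + 1)"
    by (simp add: card_Z_A)
qed

end
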